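(* Let $\lambda$ be a regular cardinal, $(P,\le)$ a poset, $i\in\{1,2,3\}$, and let $f:\lambda\to P$ be a $\lambda$-sequence that converges to $x\in P$ with respect to the topology $\tau^\lambda_{O_i}(P)$. Then there exists an isotone and cofinal function $\hat h:\lambda\to\lambda$ such that the $\lambda$-sequence $f\circ\hat h$ O$_i$-converges to $x$.
   Context: A $\lambda$-sequence in $P$ is a function $f:\lambda\to P$, regarded as a net indexed by the well-ordered (directed) set $\lambda$. A function $h:\lambda\to\lambda$ is cofinal if its range is cofinal (unbounded) in $\lambda$, and isotone if $\alpha\le\beta$ implies $h(\alpha)\le h(\beta)$. For monotone nets, $y_\gamma\uparrow y$ means increasing with supremum $y$, $z_\gamma\downarrow y$ decreasing with infimum $y$; $[a,b]:=\{t:a\le t\le b\}$; directed/filtered sets are nonempty sets in which finite subsets have upper/lower bounds in the set. A net $(x_\gamma)_{\gamma\in\Gamma}$ O$_1$-converges to $x$ if there are nets $(y_\gamma)_{\gamma\in\Gamma}$, $(z_\gamma)_{\gamma\in\Gamma}$ with eventually $y_\gamma\le x_\gamma\le z_\gamma$, $y_\gamma\uparrow x$, $z_\gamma\downarrow x$; it O$_2$-converges to $x$ if there are directed $M$ and filtered $N$ with $\sup M=\inf N=x$ such that for every $(m,n)\in M\times N$ the net is eventually in $[m,n]$; it O$_3$-converges to $x$ if the same holds with $M,N$ arbitrary subsets with $\sup M=\inf N=x$. A subset $X\subseteq P$ is O$^\lambda_i$-closed if no $\lambda$-sequence in $X$ O$_i$-converges to a point outside $X$; these sets are the closed sets of a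 topology $\tau^\lambda_{O_i}(P)$. *)

theory Defs
  imports "HOL-Analysis.Analysis"
begin

text \<open>The cardinal lambda is represented by a well-ordered type 'l whose natural order
  relation is an (infinite, regular) cardinal in the sense of the BNF cardinal library.\<close>

definition lam_rel :: "('l::wellorder) rel" where
  "lam_rel = {(a, b). a \<le> b}"

definition regular_cardinal_type :: "('l::wellorder) itself \<Rightarrow> bool" where
  "regular_cardinal_type _ \<longleftrightarrow>
     card_order (lam_rel :: 'l rel) \<and> Cinfinite (lam_rel :: 'l rel) \<and> regularCard (lam_rel :: 'l rel)"

definition is_sup :: "('p::order) set \<Rightarrow> 'p \<Rightarrow> bool" where
  "is_sup S x \<longleftrightarrow> (\<forall>s\<in>S. s \<le> x) \<and> (\<forall>u. (\<forall>s\<in>S. s \<le> u) \<longrightarrow> x \<le> u)"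

definition is_inf :: "('p::order) set \<Rightarrow> 'p \<Rightarrow> bool" where
  "is_inf S x \<longleftrightarrow> (\<forall>s\<in>S. x \<le> s) \<and> (\<forall>u. (\<forall>s\<in>S. u \<le> s) \<longrightarrow> u \<le> x)"

definition directed_set :: "('p::order) set \<Rightarrow> bool" where
  "directed_set M \<longleftrightarrow> M \<noteq> {} \<and> (\<forall>F. finite F \<and> F \<subseteq> M \<longrightarrow> (\<exists>u\<in>M. \<forall>a\<in>F. a \<le> u))"

definition filtered_set :: "('p::order) set \<Rightarrow> bool" where
  "filtered_set N \<longleftrightarrow> N \<noteq> {} \<and> (\<forall>F. finite F \<and> F \<subseteq> N \<longrightarrow> (\<exists>l\<in>N. \<forall>a\<in>F. l \<le> a))"

definition O1_conv :: "('l::wellorder \<Rightarrow> 'p::order) \<Rightarrow> 'p \<Rightarrow> bool" where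
  "O1_conv f x \<longleftrightarrow> (\<exists>y z :: 'l \<Rightarrow> 'p.
      eventually (\<lambda>\<gamma>. y \<gamma> \<le> f \<gamma> \<and> f \<gamma> \<le> z \<gamma>) at_top
    \<and> mono y \<and> is_sup (range y) x
    \<and> antimono z \<and> is_inf (range z) x)"

definition O2_conv :: "('l::wellorder \<Rightarrow> 'p::order) \<Rightarrow> 'p \<Rightarrow> bool" where
  "O2_conv f x \<longleftrightarrow> (\<exists>M N. directed_set M \<and> filtered_set N \<and> is_sup M x \<and> is_inf N x
    \<and> (\<forall>m\<in>M. \<forall>n\<in>N. eventually (\<lambda>\<gamma>. m \<le> f \<gamma> \<and> f \<gamma> \<le> n) at_top))"

definition O3_conv :: "('l::wellorder \<Rightarrow> 'p::order) \<Rightarrow> 'p \<Rightarrow> bool" where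
  "O3_conv f x \<longleftrightarrow> (\<exists>M N. is_sup M x \<and> is_inf N x
    \<and> (\<forall>m\<in>M. \<forall>n\<in>N. eventually (\<lambda>\<gamma>. m \<le> f \<gamma> \<and> f \<gamma> \<le> n) at_top))"

definition O_conv :: "nat \<Rightarrow> ('l::wellorder \<Rightarrow> 'p::order) \<Rightarrow> 'p \<Rightarrow> bool" where
  "O_conv i f x = (if i = 1 then O1_conv f x else if i = 2 then O2_conv f x else O3_conv f x)"

definition O_lam_closed :: "nat \<Rightarrow> 'l::wellorder itself \<Rightarrow> ('p::order) set \<Rightarrow> bool" where
  "O_lam_closed i _ X \<longleftrightarrow> (\<forall>(f::'l \<Rightarrow> 'p) x. range f \<subseteq> X \<and> O_conv i f x \<longrightarrow> x \<in> X)"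

definition tau_O :: "nat \<Rightarrow> 'l::wellorder itself \<Rightarrow> ('p::order) topology" where
  "tau_O i L = topology (\<lambda>U. O_lam_closed i L (- U))"

end

theory Submission
  imports Defs
begin

text \<open>
  Regularity of \<lambda> lets every map \<open>k : \<lambda> \<rightarrow> \<lambda>\<close> be restricted along an isotone cofinal
  map to one that is either constant or itself isotone and cofinal. Hence, if \<open>Y\<close> is closed,
  contains the degenerate limits (a top or bottom element is an O3-limit of every sequence)
  and every Oi-limit of an isotone cofinal subsequence of \<open>g\<close>, then \<open>range g \<union> Y\<close> is closed:
  a \<lambda>-sequence that is frequently in \<open>range g\<close> has a subsequence that is a constant or an
  isotone cofinal subsequence of \<open>g\<close>.
  If \<open>g\<close> converges topologically to \<open>x \<notin> range g\<close>, this forces some subsequence \<open>g \<circ> h\<close> to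
  Oi-converge to a non-degenerate \<open>y\<close>. Applying the same argument to \<open>g \<circ> h\<close> with \<open>{y}\<close> added
  to \<open>Y\<close> shows \<open>y = x\<close>, because non-degenerate Oi-limits are unique.
\<close>

unbundle cardinal_syntax

lemma frequently_at_top_linorder:
  "(\<exists>\<^sub>F x in at_top. P x) \<longleftrightarrow> (\<forall>a::'a::linorder. \<exists>b\<ge>a. P b)"
  unfolding frequently_def eventually_at_top_linorder by auto

lemma frequently_at_top_Un:
  fixes g :: "'l::linorder \<Rightarrow> 'a"
  assumes "range g \<subseteq> A \<union> B"
  shows "(\<exists>\<^sub>F \<beta> in at_top. g \<beta> \<in> A) \<or> (\<exists>\<^sub>F \<beta> in at_top. g \<beta> \<in> B)"
proof -
  have "\<exists>\<^sub>F \<beta> in at_top. g \<beta> \<in> A \<or> g \<beta> \<in> B"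
    using assms by (intro eventually_frequently always_eventually) auto
  then show ?thesis by (simp only: frequently_disj_iff)
qed

lemma finite_range_frequently_eq:
  assumes "finite (range g)" and "F \<noteq> bot"
  shows "\<exists>v. \<exists>\<^sub>F \<beta> in F. g \<beta> = v"
proof (rule ccontr)
  assume "\<nexists>v. \<exists>\<^sub>F \<beta> in F. g \<beta> = v"
  then have "eventually (\<lambda>\<beta>. \<forall>v\<in>range g. g \<beta> \<noteq> v) F"
    using assms(1) by (intro eventually_ball_finite) (auto simp: not_frequently)
  then have "\<exists>\<beta>. \<forall>v\<in>range g. g \<beta> \<noteq> v"
    by (rule eventually_happens'[OF assms(2)])
  then show False by auto
qed

lemma limitin_compose_filterlim:
  "limitin X f l F \<Longrightarrow> filterlim g F G \<Longrightarrow> limitin X (f \<circ> g) l G"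
  unfolding limitin_def using eventually_compose_filterlim by fastforce

definition isotone_cofinal :: "('l::linorder \<Rightarrow> 'l) \<Rightarrow> bool" where
  "isotone_cofinal h \<longleftrightarrow> mono h \<and> (\<forall>\<alpha>. \<exists>\<beta>. \<alpha> \<le> h \<beta>)"

lemma isotone_cofinal_iff_filterlim:
  "isotone_cofinal h \<longleftrightarrow> mono h \<and> filterlim h at_top at_top"
  unfolding isotone_cofinal_def filterlim_at_top eventually_at_top_linorder
  by (meson monoD order.trans order.refl)

lemma isotone_cofinal_comp:
  "isotone_cofinal h \<Longrightarrow> isotone_cofinal k \<Longrightarrow> isotone_cofinal (h \<circ> k)"
  unfolding isotone_cofinal_iff_filterlim comp_def mono_def by (auto intro: filterlim_compose)

lemma frequently_at_top_enumeration:
  fixes P :: "'l::wellorder \<Rightarrow> bool"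
  assumes "\<exists>\<^sub>F \<beta> in at_top. P \<beta>"
  obtains e where "isotone_cofinal e" "\<And>\<alpha>. \<alpha> \<le> e \<alpha>" "\<And>\<alpha>. P (e \<alpha>)"
proof
  define e where "e \<alpha> = (LEAST \<beta>. P \<beta> \<and> \<alpha> \<le> \<beta>)" for \<alpha>
  have "\<exists>\<beta>. P \<beta> \<and> \<alpha> \<le> \<beta>" for \<alpha>
    using assms unfolding frequently_at_top_linorder by blast
  then have e: "P (e \<alpha>) \<and> \<alpha> \<le> e \<alpha>" for \<alpha>
    unfolding e_def by (rule LeastI_ex)
  have "mono e"
  proof
    fix a b :: 'l
    assume "a \<le> b"
    with e[of b] have "P (e b) \<and> a \<le> e b" by auto
    then show "e a \<le> e b" unfolding e_def[of a] by (rule Least_le)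
  qed
  with e show "isotone_cofinal e" "\<And>\<alpha>. \<alpha> \<le> e \<alpha>" "\<And>\<alpha>. P (e \<alpha>)"
    unfolding isotone_cofinal_def by blast+
qed

section \<open>Order convergence along subsequences\<close>

text \<open>\<open>O_conv i\<close> is O3-convergence for every \<open>i \<notin> {1, 2}\<close>; there a greatest or least element is
  a limit of every sequence (take \<open>M = {z}, N = {}\<close> or vice versa), and these are the only
  points at which limits fail to be unique.\<close>

definition degenerate_limit :: "nat \<Rightarrow> 'p::order \<Rightarrow> bool" where
  "degenerate_limit i z \<longleftrightarrow> i \<noteq> 1 \<and> i \<noteq> 2 \<and> ((\<forall>u. u \<le> z) \<or> (\<forall>u. z \<le> u))"

definition eventually_in_intervals :: "('l::linorder \<Rightarrow> 'p::order) \<Rightarrow> 'p set \<Rightarrow> 'p set \<Rightarrow> bool" where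
  "eventually_in_intervals f M N \<longleftrightarrow>
     (\<forall>m\<in>M. \<forall>n\<in>N. eventually (\<lambda>\<gamma>. m \<le> f \<gamma> \<and> f \<gamma> \<le> n) at_top)"

lemma finite_degenerate_limits: "finite {z::'p::order. degenerate_limit i z}"
proof (rule finite_subset)
  show "{z::'p. degenerate_limit i z} \<subseteq> {GREATEST z. True, LEAST z. True}"
    unfolding degenerate_limit_def
    by (auto intro: Greatest_equality[symmetric] Least_equality[symmetric])
qed simp

lemma is_sup_cofinal_subset:
  assumes "is_sup S x" "T \<subseteq> S" "\<And>s. s \<in> S \<Longrightarrow> \<exists>t\<in>T. s \<le> t"
  shows "is_sup T x"
  using assms unfolding is_sup_def by (meson order.trans subsetD)

lemma is_inf_coinitial_subset:
  assumes "is_inf S x" "T \<subseteq> S" "\<And>s. s \<in> S \<Longrightarrow> \<exists>t\<in>T. t \<le> s"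
  shows "is_inf T x"
  using assms unfolding is_inf_def by (meson order.trans subsetD)

lemma eventually_in_intervals_compose:
  assumes "eventually_in_intervals f M N" "filterlim h at_top at_top"
  shows "eventually_in_intervals (f \<circ> h) M N"
  using assms eventually_compose_filterlim unfolding eventually_in_intervals_def comp_def by blast

lemma eventually_in_intervals_range:
  assumes "eventually (\<lambda>\<gamma>. y \<gamma> \<le> f \<gamma> \<and> f \<gamma> \<le> z \<gamma>) at_top" "mono y" "antimono z"
  shows "eventually_in_intervals f (range y) (range z)"
  unfolding eventually_in_intervals_def
proof (intro ballI)
  fix m n assume "m \<in> range y" "n \<in> range z"
  then obtain a b where ab: "m = y a" "n = z b" by blast
  from eventually_ge_at_top[of a] eventually_ge_at_top[of b] assms(1)
  show "eventually (\<lambda>\<gamma>. m \<le> f \<gamma> \<and> f \<gamma> \<le> n) at_top"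
  proof eventually_elim
    case (elim \<gamma>)
    moreover have "y a \<le> y \<gamma>" using assms(2) elim by (simp add: monoD)
    moreover have "z \<gamma> \<le> z b" using assms(3) elim by (simp add: antimonoD)
    ultimately show ?case unfolding ab by (meson order.trans)
  qed
qed

lemma O3_convI:
  "is_sup M x \<Longrightarrow> is_inf N x \<Longrightarrow> eventually_in_intervals f M N \<Longrightarrow> O3_conv f x"
  unfolding O3_conv_def eventually_in_intervals_def by blast

lemma O_conv_imp_intervals:
  assumes "O_conv i f x" and "\<not> degenerate_limit i x"
  obtains M N where "M \<noteq> {}" "N \<noteq> {}" "is_sup M x" "is_inf N x" "eventually_in_intervals f M N"
proof -
  consider (O1) "i = 1" | (O2) "i = 2" | (O3) "i \<noteq> 1" "i \<noteq> 2" by blast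
  then show thesis
  proof cases
    case O1
    then obtain y z where "eventually (\<lambda>\<gamma>. y \<gamma> \<le> f \<gamma> \<and> f \<gamma> \<le> z \<gamma>) at_top"
      and "mono y" "is_sup (range y) x" "antimono z" "is_inf (range z) x"
      using assms(1) unfolding O_conv_def O1_conv_def by auto
    then show thesis using that[of "range y" "range z"] eventually_in_intervals_range by blast
  next
    case O2
    then show thesis
      using assms(1) that unfolding O_conv_def O2_conv_def eventually_in_intervals_def
        directed_set_def filtered_set_def by auto
  next
    case O3
    then obtain M N where MN: "is_sup M x" "is_inf N x" "eventually_in_intervals f M N"
      using assms(1) unfolding O_conv_def O3_conv_def eventually_in_intervals_def by auto
    moreover have "M \<noteq> {}" "N \<noteq> {}"
      using MN(1,2) O3 assms(2) unfolding degenerate_limit_def is_sup_def is_inf_def by auto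
    ultimately show thesis using that by blast
  qed
qed

lemma O_conv_degenerate_limit:
  assumes "degenerate_limit i x"
  shows "O_conv i f x"
proof -
  have "is_sup {x} x" "is_inf {x} x" unfolding is_sup_def is_inf_def by auto
  moreover have "is_inf {} x \<or> is_sup {} x"
    using assms unfolding degenerate_limit_def is_sup_def is_inf_def by auto
  moreover have "eventually_in_intervals f M {}" "eventually_in_intervals f {} N" for M N
    unfolding eventually_in_intervals_def by simp_all
  ultimately have "O3_conv f x" by (meson O3_convI)
  then show ?thesis using assms unfolding degenerate_limit_def O_conv_def by simp
qed

lemma O_conv_const: "O_conv i (\<lambda>_::'l::wellorder. c) (c::'p::order)"
proof -
  have sup_inf: "is_sup {c} c" "is_inf {c} c" unfolding is_sup_def is_inf_def by auto
  have intervals: "eventually_in_intervals (\<lambda>_::'l. c) {c} {c}"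
    unfolding eventually_in_intervals_def by simp
  have "O1_conv (\<lambda>_::'l. c) c"
    unfolding O1_conv_def using sup_inf
    by (intro exI[of _ "\<lambda>_. c"] conjI) (auto simp: mono_def antimono_def)
  moreover have "O2_conv (\<lambda>_::'l. c) c"
    unfolding O2_conv_def eventually_in_intervals_def[symmetric] using sup_inf intervals
    by (intro exI[of _ "{c}"] conjI) (auto simp: directed_set_def filtered_set_def)
  moreover have "O3_conv (\<lambda>_::'l. c) c" using sup_inf intervals by (rule O3_convI)
  ultimately show ?thesis unfolding O_conv_def by auto
qed

lemma O_conv_le:
  assumes "O_conv i f a" "O_conv i f b" "\<not> degenerate_limit i a" "\<not> degenerate_limit i b"
  shows "a \<le> b"
proof -
  obtain M1 N1 where "N1 \<noteq> {}" "is_sup M1 a" and f1: "eventually_in_intervals f M1 N1"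
    using O_conv_imp_intervals[OF assms(1,3)] by metis
  obtain M2 N2 where "M2 \<noteq> {}" "is_inf N2 b" and f2: "eventually_in_intervals f M2 N2"
    using O_conv_imp_intervals[OF assms(2,4)] by metis
  have "m \<le> n" if "m \<in> M1" "n \<in> N2" for m n
  proof -
    obtain n1 m2 where "n1 \<in> N1" "m2 \<in> M2" using \<open>N1 \<noteq> {}\<close> \<open>M2 \<noteq> {}\<close> by blast
    then have "eventually (\<lambda>\<gamma>. m \<le> f \<gamma> \<and> f \<gamma> \<le> n1) at_top"
      "eventually (\<lambda>\<gamma>. m2 \<le> f \<gamma> \<and> f \<gamma> \<le> n) at_top"
      using that f1 f2 unfolding eventually_in_intervals_def by auto
    then have "eventually (\<lambda>\<gamma>. m \<le> f \<gamma> \<and> f \<gamma> \<le> n) at_top"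
      by eventually_elim blast
    then obtain \<gamma> where "m \<le> f \<gamma>" "f \<gamma> \<le> n"
      using eventually_happens'[OF trivial_limit_at_top_linorder] by blast
    then show ?thesis by (rule order.trans)
  qed
  with \<open>is_sup M1 a\<close> \<open>is_inf N2 b\<close> show "a \<le> b" unfolding is_sup_def is_inf_def by blast
qed

lemma O_conv_unique:
  assumes "O_conv i f a" "O_conv i f b" "\<not> degenerate_limit i a" "\<not> degenerate_limit i b"
  shows "a = b"
  using O_conv_le[OF assms] O_conv_le[OF assms(2,1,4,3)] by (rule order.antisym)

text \<open>Here \<open>c\<close> may itself be degenerate, so this is not an instance of \<open>O_conv_unique\<close>.\<close>

lemma O_conv_const_unique:
  assumes "O_conv i (\<lambda>_::'l::wellorder. c) z" and "\<not> degenerate_limit i z"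
  shows "z = (c::'p::order)"
proof -
  obtain M N where "M \<noteq> {}" "N \<noteq> {}" "is_sup M z" "is_inf N z"
    and intervals: "eventually_in_intervals (\<lambda>_::'l. c) M N"
    using O_conv_imp_intervals[OF assms] by metis
  have bounds: "m \<le> c \<and> c \<le> n" if "m \<in> M" "n \<in> N" for m n
    using intervals that unfolding eventually_in_intervals_def by simp
  have "z \<le> c"
    using \<open>is_sup M z\<close> bounds \<open>N \<noteq> {}\<close> unfolding is_sup_def by blast
  moreover have "c \<le> z"
    using \<open>is_inf N z\<close> bounds \<open>M \<noteq> {}\<close> unfolding is_inf_def by blast
  ultimately show ?thesis by (rule order.antisym)
qed

lemma O_conv_compose:
  assumes "O_conv i g x" and "isotone_cofinal h"
  shows "O_conv i (g \<circ> h) x"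
proof -
  have h: "mono h" "filterlim h at_top at_top"
    using assms(2) unfolding isotone_cofinal_iff_filterlim by auto
  have h_cofinal: "\<exists>\<beta>. \<alpha> \<le> h \<beta>" for \<alpha>
    using assms(2) unfolding isotone_cofinal_def by auto
  consider (O1) "i = 1" | (O23) "i \<noteq> 1" by blast
  then show ?thesis
  proof cases
    case O1
    then obtain y z where ev: "eventually (\<lambda>\<gamma>. y \<gamma> \<le> g \<gamma> \<and> g \<gamma> \<le> z \<gamma>) at_top"
      and y: "mono y" "is_sup (range y) x" and z: "antimono z" "is_inf (range z) x"
      using assms(1) unfolding O_conv_def O1_conv_def by auto
    have "eventually (\<lambda>\<gamma>. (y \<circ> h) \<gamma> \<le> (g \<circ> h) \<gamma> \<and> (g \<circ> h) \<gamma> \<le> (z \<circ> h) \<gamma>) at_top"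
      using eventually_compose_filterlim[OF ev h(2)] by simp
    moreover have "mono (y \<circ> h)" "antimono (z \<circ> h)"
      using y(1) z(1) h(1) by (auto simp: mono_def antimono_def)
    moreover have "is_sup (range (y \<circ> h)) x"
      by (rule is_sup_cofinal_subset[OF y(2)]) (auto, meson h_cofinal y(1) monoD)
    moreover have "is_inf (range (z \<circ> h)) x"
      by (rule is_inf_coinitial_subset[OF z(2)]) (auto, meson h_cofinal z(1) antimonoD)
    ultimately have "O1_conv (g \<circ> h) x" unfolding O1_conv_def by blast
    with O1 show ?thesis unfolding O_conv_def by simp
  next
    case O23
    with assms(1) show ?thesis
      using eventually_in_intervals_compose[OF _ h(2)]
      unfolding O_conv_def O2_conv_def O3_conv_def eventually_in_intervals_def[symmetric]
      by (auto split: if_splits; blast)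
  qed
qed

lemma O_conv_frequently_subseq:
  fixes g :: "'l::wellorder \<Rightarrow> 'p::order"
  assumes "O_conv i g z" and "\<exists>\<^sub>F \<beta> in at_top. P (g \<beta>)"
  obtains h where "isotone_cofinal h" "\<And>\<alpha>. P (g (h \<alpha>))" "O_conv i (g \<circ> h) z"
proof -
  obtain h where "isotone_cofinal h" "\<And>\<alpha>. P (g (h \<alpha>))"
    using frequently_at_top_enumeration[OF assms(2)] by blast
  then show thesis using that O_conv_compose[OF assms(1)] by blast
qed

section \<open>Subsequences indexed by a regular cardinal\<close>

lemma regular_bdd_above_image_atMost:
  fixes c :: "'l::wellorder \<Rightarrow> 'l"
  assumes "regular_cardinal_type TYPE('l)"
  shows "bdd_above (c ` {..b})"
proof (rule ccontr)
  let ?r = "lam_rel :: 'l rel"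
  assume unbounded: "\<not> bdd_above (c ` {..b})"
  have field: "Field ?r = UNIV" unfolding lam_rel_def Field_def by auto
  have card: "Card_order ?r" and infinite: "\<not> finite (Field ?r)" and regular: "regularCard ?r"
    using assms field unfolding regular_cardinal_type_def by (auto simp: cinfinite_def)
  obtain b' where "b < b'"
    using infinite_Card_order_limit[OF card infinite, of b] field unfolding lam_rel_def
    by (auto intro: that simp: less_le)
  then have "{..b} \<subseteq> underS ?r b'" unfolding underS_def lam_rel_def by auto
  then have "|c ` {..b}| <o ?r"
    using card_of_image card_of_mono1 card_of_underS[OF card] field
    by (metis UNIV_I ordLeq_ordLess_trans)
  moreover have "|c ` {..b}| =o ?r"
  proof -
    have "cofinal (c ` {..b}) ?r"
      using unbounded unfolding cofinal_def bdd_above_def lam_rel_def field by force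
    then show ?thesis using regular field unfolding regularCard_def by blast
  qed
  ultimately show False using not_ordLess_ordIso by blast
qed

lemma regular_frequently_eq_of_bounded:
  fixes k :: "'l::wellorder \<Rightarrow> 'l"
  assumes "regular_cardinal_type TYPE('l)" and "\<And>\<alpha>. k \<alpha> \<le> b"
  shows "\<exists>v. \<exists>\<^sub>F \<beta> in at_top. k \<beta> = v"
proof (rule ccontr)
  assume "\<nexists>v. \<exists>\<^sub>F \<beta> in at_top. k \<beta> = v"
  then have "\<forall>v. \<exists>C. \<forall>\<beta>\<ge>C. k \<beta> \<noteq> v"
    unfolding not_ex not_frequently eventually_at_top_linorder by blast
  then obtain C where C: "\<And>v \<beta>. C v \<le> \<beta> \<Longrightarrow> k \<beta> \<noteq> v" by metis
  obtain u where "\<And>v. v \<le> b \<Longrightarrow> C v \<le> u"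
    using regular_bdd_above_image_atMost[OF assms(1), of C b] unfolding bdd_above_def by auto
  then show False using C assms(2) by blast
qed

lemma regular_frequently_record_of_unbounded:
  fixes k :: "'l::wellorder \<Rightarrow> 'l"
  assumes "regular_cardinal_type TYPE('l)" and "\<And>b. \<exists>\<alpha>. b < k \<alpha>"
  shows "\<exists>\<^sub>F \<delta> in at_top. \<forall>\<delta>'<\<delta>. k \<delta>' < k \<delta>"
  unfolding frequently_at_top_linorder
proof
  fix a
  obtain u where u: "\<And>\<alpha>. \<alpha> \<le> a \<Longrightarrow> k \<alpha> \<le> u"
    using regular_bdd_above_image_atMost[OF assms(1), of k a] unfolding bdd_above_def by auto
  define d where "d = (LEAST d. u < k d)"
  have d: "u < k d" unfolding d_def using assms(2)[of u] by (rule LeastI_ex)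
  have "k \<delta>' < k d" if "\<delta>' < d" for \<delta>'
    using not_less_Least[OF that[unfolded d_def]] d by auto
  moreover have "a \<le> d"
  proof (rule ccontr)
    assume "\<not> a \<le> d"
    then have "k d \<le> u" using u by simp
    with d show False by simp
  qed
  ultimately show "\<exists>d\<ge>a. \<forall>\<delta>'<d. k \<delta>' < k d" by blast
qed

lemma regular_cofinal_monosub:
  fixes k :: "'l::wellorder \<Rightarrow> 'l"
  assumes "regular_cardinal_type TYPE('l)"
  shows "\<exists>\<gamma>. isotone_cofinal \<gamma> \<and> ((\<exists>c. \<forall>\<alpha>. k (\<gamma> \<alpha>) = c) \<or> isotone_cofinal (k \<circ> \<gamma>))"
proof (cases "\<exists>b. \<forall>\<alpha>. k \<alpha> \<le> b")
  case True
  then obtain v where "\<exists>\<^sub>F \<beta> in at_top. k \<beta> = v"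
    using regular_frequently_eq_of_bounded[OF assms] by blast
  then obtain \<gamma> where "isotone_cofinal \<gamma>" "\<And>\<alpha>. k (\<gamma> \<alpha>) = v"
    by (rule frequently_at_top_enumeration) blast
  then show ?thesis by blast
next
  case False
  then have "\<exists>\<^sub>F \<delta> in at_top. \<forall>\<delta>'<\<delta>. k \<delta>' < k \<delta>"
    by (intro regular_frequently_record_of_unbounded[OF assms]) (meson not_le)
  then obtain \<gamma> where \<gamma>: "isotone_cofinal \<gamma>" "\<And>\<alpha>. \<alpha> \<le> \<gamma> \<alpha>"
    and exceeds_earlier: "\<And>\<alpha> \<delta>. \<delta> < \<gamma> \<alpha> \<Longrightarrow> k \<delta> < k (\<gamma> \<alpha>)"
    by (rule frequently_at_top_enumeration) blast
  have k_le: "k \<delta> \<le> k (\<gamma> \<alpha>)" if "\<delta> \<le> \<gamma> \<alpha>" for \<delta> \<alpha>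
    using exceeds_earlier[of \<delta> \<alpha>] that unfolding le_less by auto
  have "mono (k \<circ> \<gamma>)"
    using \<gamma>(1) k_le unfolding isotone_cofinal_def mono_def by simp
  moreover have "\<exists>\<beta>. a \<le> k (\<gamma> \<beta>)" for a
  proof -
    obtain d where "a < k d" using False by (meson not_le)
    then show ?thesis using k_le[OF \<gamma>(2)[of d]] by (meson order.trans less_imp_le)
  qed
  ultimately show ?thesis using \<gamma>(1) unfolding isotone_cofinal_def by auto
qed

lemma O_conv_within_range:
  fixes f g :: "'l::wellorder \<Rightarrow> 'p::order"
  assumes "regular_cardinal_type TYPE('l)" and "range g \<subseteq> range f" and "O_conv i g z"
    and "\<not> degenerate_limit i z"
  shows "z \<in> range f \<or> (\<exists>h. isotone_cofinal h \<and> O_conv i (f \<circ> h) z)"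
proof -
  have "\<forall>\<alpha>. \<exists>j. g \<alpha> = f j" using assms(2) by blast
  then obtain k where k: "g = f \<circ> k" unfolding fun_eq_iff comp_def by metis
  obtain \<gamma> where \<gamma>: "isotone_cofinal \<gamma>"
    and const_or_cofinal: "(\<exists>c. \<forall>\<alpha>. k (\<gamma> \<alpha>) = c) \<or> isotone_cofinal (k \<circ> \<gamma>)"
    using regular_cofinal_monosub[OF assms(1)] by blast
  have conv: "O_conv i (f \<circ> (k \<circ> \<gamma>)) z"
    using O_conv_compose[OF assms(3) \<gamma>] k by (simp add: comp_assoc)
  from const_or_cofinal show ?thesis
  proof
    assume "\<exists>c. \<forall>\<alpha>. k (\<gamma> \<alpha>) = c"
    then obtain c where "f \<circ> (k \<circ> \<gamma>) = (\<lambda>_. f c)" by (auto simp: fun_eq_iff)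
    with conv have "z = f c" using O_conv_const_unique assms(4) by metis
    then show ?thesis by blast
  next
    assume "isotone_cofinal (k \<circ> \<gamma>)"
    with conv show ?thesis by blast
  qed
qed

section \<open>Closed sets and limits in the topology\<close>

lemma O_lam_closed_frequently:
  fixes g :: "'l::wellorder \<Rightarrow> 'p::order"
  assumes "O_lam_closed i TYPE('l) A" "O_conv i g z" "\<exists>\<^sub>F \<beta> in at_top. g \<beta> \<in> A"
  shows "z \<in> A"
proof -
  obtain h :: "'l \<Rightarrow> 'l" where "\<And>\<alpha>. g (h \<alpha>) \<in> A" "O_conv i (g \<circ> h) z"
    using O_conv_frequently_subseq[OF assms(2,3)] by blast
  moreover from this(1) have "range (g \<circ> h) \<subseteq> A" by auto
  ultimately show ?thesis using assms(1) unfolding O_lam_closed_def by blast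
qed

lemma O_lam_closed_Un:
  assumes "O_lam_closed i TYPE('l::wellorder) A" "O_lam_closed i TYPE('l) B"
  shows "O_lam_closed i TYPE('l) (A \<union> (B :: 'p::order set))"
  unfolding O_lam_closed_def
proof (intro allI impI, elim conjE)
  fix g :: "'l \<Rightarrow> 'p" and z
  assume "range g \<subseteq> A \<union> B" "O_conv i g z"
  then show "z \<in> A \<union> B"
    using frequently_at_top_Un O_lam_closed_frequently assms by blast
qed

lemma istopology_O_lam_closed:
  "istopology (\<lambda>U. O_lam_closed i TYPE('l::wellorder) (- (U :: 'p::order set)))"
  unfolding istopology_def
proof (intro conjI allI impI)
  fix S T :: "'p set"
  assume "O_lam_closed i TYPE('l) (- S)" "O_lam_closed i TYPE('l) (- T)"
  then show "O_lam_closed i TYPE('l) (- (S \<inter> T))"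
    unfolding Compl_Int by (rule O_lam_closed_Un)
next
  fix K :: "'p set set"
  assume "\<forall>U\<in>K. O_lam_closed i TYPE('l) (- U)"
  then show "O_lam_closed i TYPE('l) (- \<Union> K)" unfolding O_lam_closed_def by blast
qed

lemma closedin_tau_O:
  "closedin (tau_O i TYPE('l::wellorder)) K \<longleftrightarrow> O_lam_closed i TYPE('l) (K :: 'p::order set)"
proof -
  have open_iff: "openin (tau_O i TYPE('l)) U \<longleftrightarrow> O_lam_closed i TYPE('l) (- U)" for U :: "'p set"
    unfolding tau_O_def by (simp add: istopology_O_lam_closed)
  have "O_lam_closed i TYPE('l) ({} :: 'p set)" unfolding O_lam_closed_def by auto
  then have "topspace (tau_O i TYPE('l)) = (UNIV :: 'p set)"
    using open_iff[of UNIV] unfolding topspace_def by auto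
  then show ?thesis unfolding closedin_def open_iff by (simp add: Compl_eq_Diff_UNIV Diff_Diff_Int)
qed

lemma O_lam_closed_finite_Un_degenerate:
  assumes "finite F"
  shows "O_lam_closed i TYPE('l::wellorder) (F \<union> {z::'p::order. degenerate_limit i z})"
  unfolding O_lam_closed_def
proof (intro allI impI, elim conjE)
  fix g :: "'l \<Rightarrow> 'p" and z
  assume range: "range g \<subseteq> F \<union> {z. degenerate_limit i z}" and conv: "O_conv i g z"
  show "z \<in> F \<union> {z. degenerate_limit i z}"
  proof (cases "degenerate_limit i z")
    case False
    have "finite (range g)"
      using range assms finite_degenerate_limits by (meson finite_Un finite_subset)
    then obtain v where frequent: "\<exists>\<^sub>F \<beta> in at_top. g \<beta> = v"
      using finite_range_frequently_eq[OF _ trivial_limit_at_top_linorder] by blast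
    then obtain h :: "'l \<Rightarrow> 'l" where "\<And>\<alpha>. g (h \<alpha>) = v" "O_conv i (g \<circ> h) z"
      using O_conv_frequently_subseq[OF conv, of "\<lambda>u. u = v"] by blast
    then have "O_conv i (\<lambda>_::'l. v) z" by (simp add: comp_def)
    then have "z = v" by (rule O_conv_const_unique[OF _ False])
    moreover have "v \<in> range g" using frequently_ex[OF frequent] by auto
    ultimately show ?thesis using range by blast
  qed simp
qed

lemma O_lam_closed_range_Un:
  fixes f :: "'l::wellorder \<Rightarrow> 'p::order"
  assumes "regular_cardinal_type TYPE('l)" and "O_lam_closed i TYPE('l) Y"
    and "{z. degenerate_limit i z} \<subseteq> Y"
    and "\<And>h z. isotone_cofinal h \<Longrightarrow> O_conv i (f \<circ> h) z \<Longrightarrow> z \<in> Y"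
  shows "O_lam_closed i TYPE('l) (range f \<union> Y)"
  unfolding O_lam_closed_def
proof (intro allI impI, elim conjE)
  fix g :: "'l \<Rightarrow> 'p" and z
  assume range: "range g \<subseteq> range f \<union> Y" and conv: "O_conv i g z"
  from frequently_at_top_Un[OF range] show "z \<in> range f \<union> Y"
  proof
    assume "\<exists>\<^sub>F \<beta> in at_top. g \<beta> \<in> Y"
    then show ?thesis using O_lam_closed_frequently[OF assms(2) conv] by blast
  next
    assume "\<exists>\<^sub>F \<beta> in at_top. g \<beta> \<in> range f"
    then obtain e :: "'l \<Rightarrow> 'l" where "\<And>\<alpha>. g (e \<alpha>) \<in> range f" "O_conv i (g \<circ> e) z"
      using O_conv_frequently_subseq[OF conv, of "\<lambda>u. u \<in> range f"] by blast
    moreover from this(1) have "range (g \<circ> e) \<subseteq> range f" by auto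
    ultimately show ?thesis using O_conv_within_range[OF assms(1)] assms(3,4) by blast
  qed
qed

lemma limitin_tau_O_subseq_limit_outside:
  fixes g :: "'l::wellorder \<Rightarrow> 'p::order"
  assumes "regular_cardinal_type TYPE('l)" and "limitin (tau_O i TYPE('l)) g x at_top"
    and "finite S" and "x \<notin> range g \<union> S" and "\<not> degenerate_limit i x"
  shows "\<exists>h y. isotone_cofinal h \<and> O_conv i (g \<circ> h) y \<and> y \<notin> S \<and> \<not> degenerate_limit i y"
proof (rule ccontr)
  let ?Y = "S \<union> {z. degenerate_limit i z}"
  assume "\<not> ?thesis"
  then have "y \<in> ?Y" if "isotone_cofinal h" "O_conv i (g \<circ> h) y" for h y
    using that by blast
  then have "closedin (tau_O i TYPE('l)) (range g \<union> ?Y)"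
    unfolding closedin_tau_O
    by (intro O_lam_closed_range_Un[OF assms(1) O_lam_closed_finite_Un_degenerate[OF assms(3)]]) auto
  then have "x \<in> range g \<union> ?Y" by (rule limitin_closedin[OF assms(2)]) auto
  with assms(4,5) show False by blast
qed

lemma limitin_tau_O_avoiding_imp_O_conv_subseq:
  fixes g :: "'l::wellorder \<Rightarrow> 'p::order"
  assumes "regular_cardinal_type TYPE('l)" and "limitin (tau_O i TYPE('l)) g x at_top"
    and "x \<notin> range g" and "\<not> degenerate_limit i x"
  shows "\<exists>h. isotone_cofinal h \<and> O_conv i (g \<circ> h) x"
proof -
  obtain h0 y where h0: "isotone_cofinal h0" "O_conv i (g \<circ> h0) y" "\<not> degenerate_limit i y"
    using limitin_tau_O_subseq_limit_outside[OF assms(1,2), of "{}"] assms(3,4) by auto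
  have "y = x"
  proof (rule ccontr)
    assume "y \<noteq> x"
    have lim: "limitin (tau_O i TYPE('l)) (g \<circ> h0) x at_top"
      using limitin_compose_filterlim[OF assms(2)] h0(1) isotone_cofinal_iff_filterlim by blast
    have notin: "x \<notin> range (g \<circ> h0) \<union> {y}" using assms(3) \<open>y \<noteq> x\<close> by auto
    obtain h y' where h: "isotone_cofinal h" "O_conv i (g \<circ> h0 \<circ> h) y'"
      and "y' \<noteq> y" "\<not> degenerate_limit i y'"
      using limitin_tau_O_subseq_limit_outside[OF assms(1) lim _ notin assms(4)] by blast
    moreover have "O_conv i (g \<circ> h0 \<circ> h) y" using O_conv_compose[OF h0(2) h(1)] .
    ultimately show False using O_conv_unique h0(3) by blast
  qed
  with h0 show ?thesis by blast
qed

lemma eventually_eq_imp_O_conv_subseq: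
  fixes f :: "'l::wellorder \<Rightarrow> 'p::order"
  assumes "eventually (\<lambda>\<beta>. f \<beta> = x) at_top"
  shows "\<exists>h. isotone_cofinal h \<and> O_conv i (f \<circ> h) x"
proof -
  obtain a where a: "\<And>\<beta>. a \<le> \<beta> \<Longrightarrow> f \<beta> = x"
    using assms unfolding eventually_at_top_linorder by auto
  have "isotone_cofinal (\<lambda>\<beta>. max \<beta> a)"
    unfolding isotone_cofinal_def mono_def by (auto simp: le_max_iff_disj)
  moreover have "f \<circ> (\<lambda>\<beta>. max \<beta> a) = (\<lambda>_. x)" using a by (auto simp: fun_eq_iff)
  then have "O_conv i (f \<circ> (\<lambda>\<beta>. max \<beta> a)) x" by (simp add: O_conv_const)
  ultimately show ?thesis by blast
qed

lemma limitin_tau_O_imp_O_conv_subseq: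
  fixes f :: "'l::wellorder \<Rightarrow> 'p::order"
  assumes "regular_cardinal_type TYPE('l)" and "limitin (tau_O i TYPE('l)) f x at_top"
    and "\<not> degenerate_limit i x"
  shows "\<exists>h. isotone_cofinal h \<and> O_conv i (f \<circ> h) x"
proof (cases "\<exists>\<^sub>F \<beta> in at_top. f \<beta> \<noteq> x")
  case True
  then obtain e where e: "isotone_cofinal e" "\<And>\<alpha>. f (e \<alpha>) \<noteq> x"
    by (rule frequently_at_top_enumeration) blast
  then have "limitin (tau_O i TYPE('l)) (f \<circ> e) x at_top"
    using limitin_compose_filterlim[OF assms(2)] isotone_cofinal_iff_filterlim by blast
  moreover have "x \<notin> range (f \<circ> e)" using e(2) by auto
  ultimately obtain h where h: "isotone_cofinal h" "O_conv i (f \<circ> e \<circ> h) x"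
    using limitin_tau_O_avoiding_imp_O_conv_subseq[OF assms(1) _ _ assms(3)] by blast
  have "isotone_cofinal (e \<circ> h)" using isotone_cofinal_comp[OF e(1) h(1)] .
  with h(2) show ?thesis by (metis comp_assoc)
next
  case False
  then show ?thesis
    unfolding not_frequently by (simp add: eventually_eq_imp_O_conv_subseq)
qed

theorem mainTheorem3:
  fixes f :: "'l::wellorder \<Rightarrow> 'p::order" and x :: 'p and i :: nat
  assumes "regular_cardinal_type TYPE('l)"
    and "i \<in> {1, 2, 3}"
    and "limitin (tau_O i TYPE('l)) f x at_top"
  shows "\<exists>h :: 'l \<Rightarrow> 'l. mono h \<and> (\<forall>\<alpha>. \<exists>\<beta>. \<alpha> \<le> h \<beta>) \<and> O_conv i (f \<circ> h) x"
proof -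
  have "\<exists>h. isotone_cofinal h \<and> O_conv i (f \<circ> h) x"
  proof (cases "degenerate_limit i x")
    case True
    have "isotone_cofinal id" unfolding isotone_cofinal_def by (auto simp: mono_def)
    with O_conv_degenerate_limit[OF True] show ?thesis by blast
  next
    case False
    with limitin_tau_O_imp_O_conv_subseq[OF assms(1,3)] show ?thesis by blast
  qed
  then show ?thesis unfolding isotone_cofinal_def by blast
qed

end
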